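(* Let $\mathbf{K} = (\mathcal{K}, U, U_0)$ be a construction category and let $D: I \to \mathcal{K}$ be a directed diagram with maps $d_{ij}: D_i \to D_j$ ($i \le j$). Then: (1) If $D$ is full, then for any cocone $(f_i : D_i \to A)_{i \in I}$ for $D$ and any $i \in I$, we have $f_i^{-1}[U_0 A] \cap U D_i \subseteq \bigcup_{j \ge i} d_{ij}^{-1}[U_0 D_j]$. (2) An object $A$ is full if and only if for every morphism $f: A \to B$, $U A \cap f^{-1}[U_0 B] = U_0 A$. (3) If $D$ is full and $(f_i : D_i \to A)_{i \in I}$ is a cocone for $D$, then $A$ is full for $\bigcup_{i \in I} f_i[U D_i]$. In particular, if $U A = \bigcup_{i \in I} f_i[U D_i]$, then $A$ is full.
   Context: A construction category is a triple $\mathbf{K} = (\mathcal{K}, U, U_0)$ where $\mathcal{K}$ is a category, $U: \mathcal{K} \to \mathbf{Set}$ is a faithful functor, and $U_0 : \mathcal{K} \to \mathbf{Set}$ is a faithful subfunctor of $U$: for every morphism $f: A \to B$, $U_0 A \subseteq U A$ and $U_0 f = (U f)\upharpoonright U_0 A$. For a morphism $f$ and an element $x$, $f(x)$ denotes $(Uf)(x)$, and preimages/images under $f$ are taken under $Uf$. Given an object $A$ and $x \in UA$: $x$ is constructed by stage $A$ if $x \in U_0 A$; $x$ is constructible from $A$ if there is a morphism $f: A \to B$ with $f(x) \in U_0 B$. A directed diagram $D: I \to \mathcal{K}$ (indexed by a directed poset $I$) with maps $d_{ij}$ is full if for every $i \in I$ and $x \in U D_i$: if $d_{ij}(x)$ is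 constructible from $D_j$ for all $j \ge i$, then there exists $j \ge i$ such that $d_{ij}(x)$ is constructed by stage $D_j$. For an object $A$ and $X \subseteq UA$, $A$ is full for $X$ if every $x \in X$ constructible from $A$ is constructed by stage $A$; $A$ is full if it is full for $UA$. *)

theory Defs
  imports Main
begin

record ('o, 'm) cat =
  Ob   :: "'o set"
  Mor  :: "'m set"
  Dom  :: "'m \<Rightarrow> 'o"
  Cod  :: "'m \<Rightarrow> 'o"
  Id   :: "'o \<Rightarrow> 'm"
  Comp :: "'m \<Rightarrow> 'm \<Rightarrow> 'm"   (* Comp g f = g \<circ> f *)

definition category :: "('o, 'm, 'x) cat_scheme \<Rightarrow> bool" where
  "category C \<longleftrightarrow>
     (\<forall>f\<in>Mor C. Dom C f \<in> Ob C \<and> Cod C f \<in> Ob C) \<and>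
     (\<forall>a\<in>Ob C. Id C a \<in> Mor C \<and> Dom C (Id C a) = a \<and> Cod C (Id C a) = a) \<and>
     (\<forall>f\<in>Mor C. \<forall>g\<in>Mor C. Cod C f = Dom C g \<longrightarrow>
        Comp C g f \<in> Mor C \<and> Dom C (Comp C g f) = Dom C f \<and> Cod C (Comp C g f) = Cod C g) \<and>
     (\<forall>f\<in>Mor C. Comp C f (Id C (Dom C f)) = f \<and> Comp C (Id C (Cod C f)) f = f) \<and>
     (\<forall>f\<in>Mor C. \<forall>g\<in>Mor C. \<forall>h\<in>Mor C. Cod C f = Dom C g \<longrightarrow> Cod C g = Dom C h \<longrightarrow>
        Comp C h (Comp C g f) = Comp C (Comp C h g) f)"

text \<open>The functor U to Set is given by an object part Uo (sets of elements of a fixed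
  universe type 'e) and a morphism part Umor; the subfunctor U0 only needs an object
  part since its morphism part is the restriction of Umor.\<close>

record ('o, 'm, 'e) ccat = "('o, 'm) cat" +
  Uo   :: "'o \<Rightarrow> 'e set"
  Umor :: "'m \<Rightarrow> 'e \<Rightarrow> 'e"
  U0   :: "'o \<Rightarrow> 'e set"

definition set_functor :: "('o, 'm, 'x) cat_scheme \<Rightarrow> ('o \<Rightarrow> 'e set) \<Rightarrow> ('m \<Rightarrow> 'e \<Rightarrow> 'e) \<Rightarrow> bool" where
  "set_functor C F Fm \<longleftrightarrow>
     (\<forall>f\<in>Mor C. Fm f ` F (Dom C f) \<subseteq> F (Cod C f)) \<and>
     (\<forall>a\<in>Ob C. \<forall>x\<in>F a. Fm (Id C a) x = x) \<and>
     (\<forall>f\<in>Mor C. \<forall>g\<in>Mor C. Cod C f = Dom C g \<longrightarrow>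
        (\<forall>x\<in>F (Dom C f). Fm (Comp C g f) x = Fm g (Fm f x)))"

definition faithful_on :: "('o, 'm, 'x) cat_scheme \<Rightarrow> ('o \<Rightarrow> 'e set) \<Rightarrow> ('m \<Rightarrow> 'e \<Rightarrow> 'e) \<Rightarrow> bool" where
  "faithful_on C F Fm \<longleftrightarrow>
     (\<forall>f\<in>Mor C. \<forall>g\<in>Mor C. Dom C f = Dom C g \<longrightarrow> Cod C f = Cod C g \<longrightarrow>
        (\<forall>x\<in>F (Dom C f). Fm f x = Fm g x) \<longrightarrow> f = g)"

definition construction_category :: "('o, 'm, 'e) ccat \<Rightarrow> bool" where
  "construction_category K \<longleftrightarrow>
     category K \<and>
     set_functor K (Uo K) (Umor K) \<and> faithful_on K (Uo K) (Umor K) \<and>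
     (\<forall>a\<in>Ob K. U0 K a \<subseteq> Uo K a) \<and>
     set_functor K (U0 K) (Umor K) \<and> faithful_on K (U0 K) (Umor K)"

definition constructed_by :: "('o, 'm, 'e) ccat \<Rightarrow> 'o \<Rightarrow> 'e \<Rightarrow> bool" where
  "constructed_by K A x \<longleftrightarrow> x \<in> U0 K A"

definition constructible_from :: "('o, 'm, 'e) ccat \<Rightarrow> 'o \<Rightarrow> 'e \<Rightarrow> bool" where
  "constructible_from K A x \<longleftrightarrow> x \<in> Uo K A \<and>
     (\<exists>f\<in>Mor K. Dom K f = A \<and> Umor K f x \<in> U0 K (Cod K f))"

definition full_for :: "('o, 'm, 'e) ccat \<Rightarrow> 'o \<Rightarrow> 'e set \<Rightarrow> bool" where
  "full_for K A X \<longleftrightarrow> (\<forall>x\<in>X. constructible_from K A x \<longrightarrow> constructed_by K A x)"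

definition full_obj :: "('o, 'm, 'e) ccat \<Rightarrow> 'o \<Rightarrow> bool" where
  "full_obj K A \<longleftrightarrow> full_for K A (Uo K A)"

definition directed_poset :: "'i set \<Rightarrow> ('i \<Rightarrow> 'i \<Rightarrow> bool) \<Rightarrow> bool" where
  "directed_poset I le \<longleftrightarrow> I \<noteq> {} \<and>
     (\<forall>i\<in>I. le i i) \<and>
     (\<forall>i\<in>I. \<forall>j\<in>I. le i j \<longrightarrow> le j i \<longrightarrow> i = j) \<and>
     (\<forall>i\<in>I. \<forall>j\<in>I. \<forall>k\<in>I. le i j \<longrightarrow> le j k \<longrightarrow> le i k) \<and>
     (\<forall>i\<in>I. \<forall>j\<in>I. \<exists>k\<in>I. le i k \<and> le j k)"

definition directed_diagram ::
  "('o, 'm, 'e) ccat \<Rightarrow> 'i set \<Rightarrow> ('i \<Rightarrow> 'i \<Rightarrow> bool) \<Rightarrow> ('i \<Rightarrow> 'o) \<Rightarrow> ('i \<Rightarrow> 'i \<Rightarrow> 'm) \<Rightarrow> bool" where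
  "directed_diagram K I le D d \<longleftrightarrow>
     directed_poset I le \<and>
     (\<forall>i\<in>I. D i \<in> Ob K) \<and>
     (\<forall>i\<in>I. \<forall>j\<in>I. le i j \<longrightarrow> d i j \<in> Mor K \<and> Dom K (d i j) = D i \<and> Cod K (d i j) = D j) \<and>
     (\<forall>i\<in>I. d i i = Id K (D i)) \<and>
     (\<forall>i\<in>I. \<forall>j\<in>I. \<forall>k\<in>I. le i j \<longrightarrow> le j k \<longrightarrow> Comp K (d j k) (d i j) = d i k)"

definition cocone ::
  "('o, 'm, 'e) ccat \<Rightarrow> 'i set \<Rightarrow> ('i \<Rightarrow> 'i \<Rightarrow> bool) \<Rightarrow> ('i \<Rightarrow> 'o) \<Rightarrow> ('i \<Rightarrow> 'i \<Rightarrow> 'm)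
     \<Rightarrow> 'o \<Rightarrow> ('i \<Rightarrow> 'm) \<Rightarrow> bool" where
  "cocone K I le D d A f \<longleftrightarrow> A \<in> Ob K \<and>
     (\<forall>i\<in>I. f i \<in> Mor K \<and> Dom K (f i) = D i \<and> Cod K (f i) = A) \<and>
     (\<forall>i\<in>I. \<forall>j\<in>I. le i j \<longrightarrow> Comp K (f j) (d i j) = f i)"

definition full_diagram ::
  "('o, 'm, 'e) ccat \<Rightarrow> 'i set \<Rightarrow> ('i \<Rightarrow> 'i \<Rightarrow> bool) \<Rightarrow> ('i \<Rightarrow> 'o) \<Rightarrow> ('i \<Rightarrow> 'i \<Rightarrow> 'm) \<Rightarrow> bool" where
  "full_diagram K I le D d \<longleftrightarrow>
     (\<forall>i\<in>I. \<forall>x\<in>Uo K (D i).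
        (\<forall>j\<in>I. le i j \<longrightarrow> constructible_from K (D j) (Umor K (d i j) x)) \<longrightarrow>
        (\<exists>j\<in>I. le i j \<and> constructed_by K (D j) (Umor K (d i j) x)))"

end

theory Submission
  imports Defs
begin

text \<open>If \<open>f\<^sub>i(x)\<close> is constructible from the cocone vertex \<open>A\<close>, say via \<open>g : A \<rightarrow> B\<close>, then for
  every \<open>j \<ge> i\<close> the element \<open>d\<^sub>i\<^sub>j(x)\<close> is constructible from \<open>D\<^sub>j\<close> via \<open>g \<circ> f\<^sub>j\<close>, because
  \<open>f\<^sub>j \<circ> d\<^sub>i\<^sub>j = f\<^sub>i\<close>. Fullness of the diagram then constructs \<open>d\<^sub>i\<^sub>j(x)\<close> by some stage \<open>D\<^sub>j\<close>,
  and \<open>U\<^sub>0\<close> being a subfunctor carries this along \<open>f\<^sub>j\<close> to \<open>f\<^sub>i(x) \<in> U\<^sub>0 A\<close>. Part (1) is the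
  case of elements already constructed in \<open>A\<close> (constructible via the identity), part (2)
  unfolds the definitions using that \<open>U\<^sub>0\<close> is preserved by every morphism.\<close>

lemma category_comp:
  assumes "category C" "f \<in> Mor C" "g \<in> Mor C" "Cod C f = Dom C g"
  shows "Comp C g f \<in> Mor C" "Dom C (Comp C g f) = Dom C f" "Cod C (Comp C g f) = Cod C g"
  using assms unfolding category_def by blast+

lemma category_Id:
  assumes "category C" "a \<in> Ob C"
  shows "Id C a \<in> Mor C" "Dom C (Id C a) = a" "Cod C (Id C a) = a"
  using assms unfolding category_def by blast+

lemma set_functor_map:
  assumes "set_functor C F Fm" "f \<in> Mor C" "x \<in> F (Dom C f)"
  shows "Fm f x \<in> F (Cod C f)"
  using assms unfolding set_functor_def by blast

lemma set_functor_comp: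
  assumes "set_functor C F Fm" "f \<in> Mor C" "g \<in> Mor C" "Cod C f = Dom C g" "x \<in> F (Dom C f)"
  shows "Fm (Comp C g f) x = Fm g (Fm f x)"
  using assms unfolding set_functor_def by blast

context
  fixes K :: "('o, 'm, 'e) ccat"
  assumes cc: "construction_category K"
begin

lemma Umor_in_Uo: "f \<in> Mor K \<Longrightarrow> x \<in> Uo K (Dom K f) \<Longrightarrow> Umor K f x \<in> Uo K (Cod K f)"
  using cc set_functor_map unfolding construction_category_def by metis

lemma Umor_in_U0: "f \<in> Mor K \<Longrightarrow> x \<in> U0 K (Dom K f) \<Longrightarrow> Umor K f x \<in> U0 K (Cod K f)"
  using cc set_functor_map unfolding construction_category_def by metis

lemma U0_subset_Uo: "A \<in> Ob K \<Longrightarrow> U0 K A \<subseteq> Uo K A"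
  using cc unfolding construction_category_def by blast

lemma Umor_comp:
  "f \<in> Mor K \<Longrightarrow> g \<in> Mor K \<Longrightarrow> Cod K f = Dom K g \<Longrightarrow> x \<in> Uo K (Dom K f) \<Longrightarrow>
    Umor K (Comp K g f) x = Umor K g (Umor K f x)"
  using cc set_functor_comp unfolding construction_category_def by metis

lemma constructed_imp_constructible:
  assumes "A \<in> Ob K" "constructed_by K A x"
  shows "constructible_from K A x"
proof -
  have "category K" using cc unfolding construction_category_def by blast
  note Id = category_Id[OF this assms(1)]
  have "x \<in> Uo K A" using assms U0_subset_Uo unfolding constructed_by_def by blast
  moreover have "Umor K (Id K A) x \<in> U0 K (Cod K (Id K A))"
    using Umor_in_U0[OF Id(1)] assms(2) Id unfolding constructed_by_def by simp
  ultimately show ?thesis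
    unfolding constructible_from_def using Id by blast
qed

lemma constructible_from_Umor:
  assumes h: "h \<in> Mor K" "x \<in> Uo K (Dom K h)"
    and "constructible_from K (Cod K h) (Umor K h x)"
  shows "constructible_from K (Dom K h) x"
proof -
  obtain g where g: "g \<in> Mor K" "Dom K g = Cod K h" "Umor K g (Umor K h x) \<in> U0 K (Cod K g)"
    using assms(3) unfolding constructible_from_def by blast
  have "category K" using cc unfolding construction_category_def by blast
  note gh = category_comp[OF this h(1) g(1) g(2)[symmetric]]
  have "Umor K (Comp K g h) x \<in> U0 K (Cod K (Comp K g h))"
    using g(3) gh(3) Umor_comp[OF h(1) g(1) g(2)[symmetric] h(2)] by simp
  then show ?thesis
    unfolding constructible_from_def using h(2) gh(1,2) by blast
qed

lemma full_obj_iff_preimage_U0: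
  assumes "A \<in> Ob K"
  shows "full_obj K A \<longleftrightarrow>
    (\<forall>g\<in>Mor K. Dom K g = A \<longrightarrow> {x \<in> Uo K A. Umor K g x \<in> U0 K (Cod K g)} = U0 K A)"
  using Umor_in_U0 U0_subset_Uo[OF assms]
  unfolding full_obj_def full_for_def constructible_from_def constructed_by_def by blast

context
  fixes I :: "'i set" and le :: "'i \<Rightarrow> 'i \<Rightarrow> bool"
    and D :: "'i \<Rightarrow> 'o" and d :: "'i \<Rightarrow> 'i \<Rightarrow> 'm"
    and A :: 'o and f :: "'i \<Rightarrow> 'm"
  assumes dd: "directed_diagram K I le D d"
    and co: "cocone K I le D d A f"
begin

lemma cocone_Umor_transition:
  assumes "i \<in> I" "j \<in> I" "le i j" "y \<in> Uo K (D i)"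
  shows "Umor K (d i j) y \<in> Uo K (D j)" "Umor K (f j) (Umor K (d i j) y) = Umor K (f i) y"
proof -
  have d: "d i j \<in> Mor K" "Dom K (d i j) = D i" "Cod K (d i j) = D j"
    using dd assms(1-3) unfolding directed_diagram_def by blast+
  have fj: "f j \<in> Mor K" "Dom K (f j) = D j" and comm: "Comp K (f j) (d i j) = f i"
    using co assms(1-3) unfolding cocone_def by blast+
  show "Umor K (d i j) y \<in> Uo K (D j)"
    using Umor_in_Uo[OF d(1)] d assms(4) by simp
  show "Umor K (f j) (Umor K (d i j) y) = Umor K (f i) y"
    using Umor_comp[OF d(1) fj(1)] d fj comm assms(4) by simp
qed

lemma cocone_constructible_transition:
  assumes "i \<in> I" "j \<in> I" "le i j" "y \<in> Uo K (D i)"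
    and "constructible_from K A (Umor K (f i) y)"
  shows "constructible_from K (D j) (Umor K (d i j) y)"
proof -
  have fj: "f j \<in> Mor K" "Dom K (f j) = D j" "Cod K (f j) = A"
    using co assms(2) unfolding cocone_def by blast+
  show ?thesis
    using constructible_from_Umor[OF fj(1)] fj assms cocone_Umor_transition[OF assms(1-4)] by simp
qed

lemma full_diagram_constructs_stage:
  assumes "full_diagram K I le D d" "i \<in> I" "y \<in> Uo K (D i)"
    and "constructible_from K A (Umor K (f i) y)"
  obtains j where "j \<in> I" "le i j" "Umor K (d i j) y \<in> U0 K (D j)"
  using assms cocone_constructible_transition
  unfolding full_diagram_def constructed_by_def by blast

lemma full_diagram_cocone_preimage_U0:
  assumes "full_diagram K I le D d" "i \<in> I"
  shows "{x \<in> Uo K (D i). Umor K (f i) x \<in> U0 K A}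
    \<subseteq> (\<Union>j\<in>{j \<in> I. le i j}. {x \<in> Uo K (D i). Umor K (d i j) x \<in> U0 K (D j)})"
proof
  fix x assume x: "x \<in> {x \<in> Uo K (D i). Umor K (f i) x \<in> U0 K A}"
  have "A \<in> Ob K" using co unfolding cocone_def by blast
  with x have "constructible_from K A (Umor K (f i) x)"
    using constructed_imp_constructible unfolding constructed_by_def by blast
  with assms x obtain j where "j \<in> I" "le i j" "Umor K (d i j) x \<in> U0 K (D j)"
    using full_diagram_constructs_stage by blast
  with x show "x \<in> (\<Union>j\<in>{j \<in> I. le i j}. {x \<in> Uo K (D i). Umor K (d i j) x \<in> U0 K (D j)})"
    by blast
qed

lemma full_diagram_cocone_full_for_image:
  assumes "full_diagram K I le D d"
  shows "full_for K A (\<Union>i\<in>I. Umor K (f i) ` Uo K (D i))"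
  unfolding full_for_def
proof (intro ballI impI)
  fix x assume "x \<in> (\<Union>i\<in>I. Umor K (f i) ` Uo K (D i))" and cf: "constructible_from K A x"
  then obtain i y where i: "i \<in> I" and y: "y \<in> Uo K (D i)" and x: "x = Umor K (f i) y"
    by blast
  obtain j where j: "j \<in> I" "le i j" "Umor K (d i j) y \<in> U0 K (D j)"
    using full_diagram_constructs_stage[OF assms i y] cf x by blast
  have fj: "f j \<in> Mor K" "Dom K (f j) = D j" "Cod K (f j) = A"
    using co j(1) unfolding cocone_def by blast+
  have "Umor K (f j) (Umor K (d i j) y) \<in> U0 K A"
    using Umor_in_U0[OF fj(1)] fj j(3) by simp
  then show "constructed_by K A x"
    using cocone_Umor_transition(2)[OF i j(1,2) y] x unfolding constructed_by_def by simp
qed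

end

end

theorem lemmaA5:
  fixes K :: "('o, 'm, 'e) ccat"
    and I :: "'i set" and le :: "'i \<Rightarrow> 'i \<Rightarrow> bool"
    and D :: "'i \<Rightarrow> 'o" and d :: "'i \<Rightarrow> 'i \<Rightarrow> 'm"
  assumes "construction_category K"
    and "directed_diagram K I le D d"
  shows "(full_diagram K I le D d \<longrightarrow>
            (\<forall>A f. cocone K I le D d A f \<longrightarrow>
               (\<forall>i\<in>I. {x \<in> Uo K (D i). Umor K (f i) x \<in> U0 K A}
                  \<subseteq> (\<Union>j\<in>{j \<in> I. le i j}. {x \<in> Uo K (D i). Umor K (d i j) x \<in> U0 K (D j)}))))
       \<and> (\<forall>A\<in>Ob K. full_obj K A \<longleftrightarrow>
            (\<forall>g\<in>Mor K. Dom K g = A \<longrightarrow> {x \<in> Uo K A. Umor K g x \<in> U0 K (Cod K g)} = U0 K A))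
       \<and> (full_diagram K I le D d \<longrightarrow>
            (\<forall>A f. cocone K I le D d A f \<longrightarrow>
               full_for K A (\<Union>i\<in>I. Umor K (f i) ` Uo K (D i)) \<and>
               (Uo K A = (\<Union>i\<in>I. Umor K (f i) ` Uo K (D i)) \<longrightarrow> full_obj K A)))"
proof (intro conjI impI allI ballI)
  fix A f i
  assume "full_diagram K I le D d" "cocone K I le D d A f" "i \<in> I"
  then show "{x \<in> Uo K (D i). Umor K (f i) x \<in> U0 K A}
      \<subseteq> (\<Union>j\<in>{j \<in> I. le i j}. {x \<in> Uo K (D i). Umor K (d i j) x \<in> U0 K (D j)})"
    using full_diagram_cocone_preimage_U0[OF assms] by blast
next
  fix A assume "A \<in> Ob K"
  then show "full_obj K A \<longleftrightarrow>
      (\<forall>g\<in>Mor K. Dom K g = A \<longrightarrow> {x \<in> Uo K A. Umor K g x \<in> U0 K (Cod K g)} = U0 K A)"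
    by (rule full_obj_iff_preimage_U0[OF assms(1)])
next
  fix A f
  assume "full_diagram K I le D d" "cocone K I le D d A f"
  then show image_full: "full_for K A (\<Union>i\<in>I. Umor K (f i) ` Uo K (D i))"
    using full_diagram_cocone_full_for_image[OF assms] by blast
  show "Uo K A = (\<Union>i\<in>I. Umor K (f i) ` Uo K (D i)) \<Longrightarrow> full_obj K A"
    using image_full unfolding full_obj_def by simp
qed

end
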